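(* Let $\theta:[0,1]\to[0,\infty]$ and $\vartheta:[0,\infty]\to[0,1]$ be continuous and decreasing functions, and suppose that the function $O_{\theta,\vartheta}:[0,1]^2\to[0,1]$, $O_{\theta,\vartheta}(x,y)=\vartheta(\theta(x)+\theta(y))$, is an overlap function. Then: (i) $\theta(x)=\infty$ if and only if $x=0$; (ii) $\vartheta(x)=0$ if and only if $x=\infty$.
   Context: "Decreasing" means non-increasing and "increasing" means non-decreasing. Arithmetic in $[0,\infty]$ uses $c+\infty=\infty+c=\infty$; continuity on $[0,\infty]$ refers to the usual topology of the extended half-line. An overlap function is a map $O:[0,1]^2\to[0,1]$ that is (O1) commutative, (O2) $O(x,y)=0$ iff $xy=0$, (O3) $O(x,y)=1$ iff $xy=1$, (O4) increasing in each variable, (O5) continuous. If $O_{\theta,\vartheta}$ is an overlap function, $(\theta,\vartheta)$ is called an additive generator pair of it. *)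

theory Defs
  imports "HOL-Analysis.Analysis" "HOL-Library.Extended_Nonnegative_Real"
begin

definition overlap_function :: "(real \<Rightarrow> real \<Rightarrow> real) \<Rightarrow> bool" where
  "overlap_function Ov \<longleftrightarrow>
     (\<forall>x\<in>{0..1}. \<forall>y\<in>{0..1}. Ov x y \<in> {0..1}) \<and>
     (\<forall>x\<in>{0..1}. \<forall>y\<in>{0..1}. Ov x y = Ov y x) \<and>
     (\<forall>x\<in>{0..1}. \<forall>y\<in>{0..1}. Ov x y = 0 \<longleftrightarrow> x * y = 0) \<and>
     (\<forall>x\<in>{0..1}. \<forall>y\<in>{0..1}. Ov x y = 1 \<longleftrightarrow> x * y = 1) \<and>
     (\<forall>x\<in>{0..1}. \<forall>x'\<in>{0..1}. \<forall>y\<in>{0..1}. x \<le> x' \<longrightarrow> Ov x y \<le> Ov x' y) \<and>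
     (\<forall>x\<in>{0..1}. \<forall>y\<in>{0..1}. \<forall>y'\<in>{0..1}. y \<le> y' \<longrightarrow> Ov x y \<le> Ov x y') \<and>
     continuous_on ({0..1} \<times> {0..1}) (\<lambda>(x, y). Ov x y)"

definition O_gen :: "(real \<Rightarrow> ennreal) \<Rightarrow> (ennreal \<Rightarrow> real) \<Rightarrow> real \<Rightarrow> real \<Rightarrow> real" where
  "O_gen \<theta> \<phi> x y = \<phi> (\<theta> x + \<theta> y)"

end

theory Submission
  imports Defs
begin

text \<open>Because \<open>O\<^sub>\<theta>\<^sub>,\<^sub>\<vartheta>(x, x) = \<vartheta>(2\<theta>(x))\<close> vanishes only at \<open>x = 0\<close>,
  and \<open>\<vartheta>\<close> is decreasing and \<open>\<theta>\<close> continuous, every zero of \<open>\<vartheta>\<close> lies above \<open>2\<theta>(0)\<close>.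
  Applied to the zero \<open>\<theta>(0) + \<theta>(1)\<close> this forces \<open>\<theta>(0) = \<infinity>\<close>: otherwise \<open>\<theta>(0) = \<theta>(1)\<close>
  and \<open>O(0, 1) = O(1, 1) = 1\<close>. Hence \<open>\<infinity>\<close> is the only zero of \<open>\<vartheta>\<close>, and \<open>\<theta>(x) = \<infinity>\<close>
  gives \<open>O(x, x) = 0\<close>, i.e. \<open>x = 0\<close>.\<close>

lemma antimono_zero_ge_at_left_endpoint:
  fixes g :: "real \<Rightarrow> 'a::linorder_topology" and \<phi> :: "'a \<Rightarrow> real"
  assumes "continuous_on {a..b} g" "a < b" "antimono \<phi>" "\<And>s. 0 \<le> \<phi> s"
    and "\<And>x. a < x \<Longrightarrow> x \<le> b \<Longrightarrow> \<phi> (g x) \<noteq> 0" and "\<phi> t = 0"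
  shows "g a \<le> t"
proof (rule ccontr)
  assume "\<not> g a \<le> t"
  then have "\<forall>\<^sub>F x in at_right a. t < g x"
    using order_tendstoD(1)[OF continuous_on_Icc_at_rightD[OF assms(1,2)]] by simp
  moreover have "\<forall>\<^sub>F x in at_right a. a < x \<and> x < b"
    unfolding eventually_at_right[OF assms(2)] using assms(2) by blast
  ultimately have "\<forall>\<^sub>F x in at_right a. t < g x \<and> a < x \<and> x < b"
    by (rule eventually_conj)
  then obtain x where x: "t < g x" "a < x" "x < b"
    using eventually_happens'[OF trivial_limit_at_right_real] by blast
  then have "\<phi> (g x) \<le> \<phi> t"
    using assms(3) by (simp add: antimono_def)
  then show False
    using assms(4-6) x by (metis antisym less_imp_le)
qed

theorem theorem3p1:
  fixes \<theta> :: "real \<Rightarrow> ennreal" and \<phi> :: "ennreal \<Rightarrow> real"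
  assumes "\<phi> ` UNIV \<subseteq> {0..1}"
    and "continuous_on {0..1} \<theta>" and "antimono_on {0..1} \<theta>"
    and "continuous_on UNIV \<phi>" and "antimono \<phi>"
    and "overlap_function (O_gen \<theta> \<phi>)"
  shows "(\<forall>x\<in>{0..1}. \<theta> x = \<infinity> \<longleftrightarrow> x = 0) \<and> (\<forall>x. \<phi> x = 0 \<longleftrightarrow> x = \<infinity>)"
proof -
  have zero: "\<And>x y. x \<in> {0..1} \<Longrightarrow> y \<in> {0..1} \<Longrightarrow> \<phi> (\<theta> x + \<theta> y) = 0 \<longleftrightarrow> x * y = 0"
    and one: "\<And>x y. x \<in> {0..1} \<Longrightarrow> y \<in> {0..1} \<Longrightarrow> \<phi> (\<theta> x + \<theta> y) = 1 \<longleftrightarrow> x * y = 1"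
    using assms(6) unfolding overlap_function_def O_gen_def by auto
  have zero_ge: "\<theta> 0 + \<theta> 0 \<le> t" if "\<phi> t = 0" for t
    using antimono_zero_ge_at_left_endpoint[of 0 1 "\<lambda>x. \<theta> x + \<theta> x" \<phi> t]
      continuous_on_add[OF assms(2,2)] assms(1,5) zero that by (auto simp: image_subset_iff)
  have \<theta>0: "\<theta> 0 = \<infinity>"
  proof (rule ccontr)
    assume "\<theta> 0 \<noteq> \<infinity>"
    moreover have "\<theta> 0 + \<theta> 0 \<le> \<theta> 0 + \<theta> 1"
      using zero_ge zero[of 0 1] by simp
    ultimately have "\<theta> 0 \<le> \<theta> 1"
      by (simp add: ennreal_add_left_cancel_le)
    moreover have "\<theta> 1 \<le> \<theta> 0"
      using assms(3) by (auto simp: monotone_on_def)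
    ultimately show False
      using zero[of 0 1] one[of 1 1] by simp
  qed
  have \<phi>_infinity: "\<phi> \<infinity> = 0"
    using zero[of 0 0] \<theta>0 by simp
  show ?thesis
  proof (intro conjI ballI allI iffI)
    show "x = 0" if "x \<in> {0..1}" "\<theta> x = \<infinity>" for x
      using zero[of x x] \<phi>_infinity that by simp
    show "t = \<infinity>" if "\<phi> t = 0" for t
      using zero_ge[OF that] \<theta>0 by (simp add: top_unique)
  qed (use \<theta>0 \<phi>_infinity in auto)
qed

end
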